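(* Let $\mathcal A$ be a finite set of monomials of $S=K[x_1,\ldots,x_n]$, minimal with respect to divisibility, let $\alpha=(k_1,\ldots,k_n)\in\mathbb N^n$, fix $i$, and let $\beta=\alpha+\epsilon_i$. Let $\gamma=\mathbf 1+\epsilon_{ik_i}\in\mathbb N^{|\alpha|}$, where $\mathbf 1$ is the all-ones vector and $\epsilon_{ik_i}$ is the unit vector at the coordinate corresponding to the variable $x_{ik_i}$ of $S^\alpha$. Then there is a $K$-algebra isomorphism $K[(\mathcal A^\alpha)^\gamma]\cong K[\mathcal A^\beta]$ (induced by a relabeling of variables).
   Context: $\mathbb N$ denotes the positive integers. For $\alpha=(k_1,\ldots,k_n)$, $S^\alpha=K[x_{ij}:1\le i\le n,1\le j\le k_i]$, $\pi:S^\alpha\to S$, $x_{ij}\mapsto x_i$, and for a set $\mathcal A$ of monomials of $S$ minimal w.r.t. divisibility, $\mathcal A^\alpha$ is the set of monomials $w\in S^\alpha$ with $\pi(w)\in\mathcal A$. The same construction is applied to $\mathcal A^\alpha$, viewed as a set of monomials in the $|\alpha|=k_1+\cdots+k_n$ variables $x_{ij}$ of $S^\alpha$, with respect to $\gamma\in\mathbb N^{|\alpha|}$, giving $(\mathcal A^\alpha)^\gamma$. $K[\mathcal B]$ denotes the $K$-algebra generated by a set of monomials $\mathcal B$. *)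

theory Defs
  imports Main "HOL-Library.Poly_Mapping"
begin

type_synonym 'v monomial = "'v \<Rightarrow>\<^sub>0 nat"
type_synonym ('v,'k) mpoly = "('v \<Rightarrow>\<^sub>0 nat) \<Rightarrow>\<^sub>0 'k"

definition mon_dvd :: "'v monomial \<Rightarrow> 'v monomial \<Rightarrow> bool" where
  "mon_dvd u v \<longleftrightarrow> (\<forall>x. Poly_Mapping.lookup u x \<le> Poly_Mapping.lookup v x)"

definition minimal_mon_set :: "'v monomial set \<Rightarrow> bool" where
  "minimal_mon_set A \<longleftrightarrow> (\<forall>u\<in>A. \<forall>v\<in>A. mon_dvd u v \<longrightarrow> u = v)"

(* Variables x_{v,l}, v \<in> V, 0 \<le> l < g v (0-based version of 1 \<le> j \<le> k_i). *)
definition exp_vars :: "'v set \<Rightarrow> ('v \<Rightarrow> nat) \<Rightarrow> ('v \<times> nat) set" where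
  "exp_vars V g = {(v, l). v \<in> V \<and> l < g v}"

(* The projection pi : x_{v,l} \<mapsto> x_v on monomials. *)
definition mon_proj :: "('v \<Rightarrow> nat) \<Rightarrow> ('v \<times> nat) monomial \<Rightarrow> 'v monomial" where
  "mon_proj g w = Abs_poly_mapping (\<lambda>v. \<Sum>l<g v. Poly_Mapping.lookup w (v, l))"

definition expand :: "'v set \<Rightarrow> ('v \<Rightarrow> nat) \<Rightarrow> 'v monomial set \<Rightarrow> ('v \<times> nat) monomial set" where
  "expand V g A = {w. Poly_Mapping.keys w \<subseteq> exp_vars V g \<and> mon_proj g w \<in> A}"

inductive_set mon_alg :: "'v monomial set \<Rightarrow> ('v,'k::field) mpoly set"
  for B :: "'v monomial set" where
  const: "Poly_Mapping.single 0 c \<in> mon_alg B"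
| gen: "m \<in> B \<Longrightarrow> Poly_Mapping.single m 1 \<in> mon_alg B"
| add: "p \<in> mon_alg B \<Longrightarrow> q \<in> mon_alg B \<Longrightarrow> p + q \<in> mon_alg B"
| mult: "p \<in> mon_alg B \<Longrightarrow> q \<in> mon_alg B \<Longrightarrow> p * q \<in> mon_alg B"

definition alg_iso_betw :: "(('v,'k::field) mpoly \<Rightarrow> ('w,'k) mpoly) \<Rightarrow> ('v,'k) mpoly set \<Rightarrow> ('w,'k) mpoly set \<Rightarrow> bool" where
  "alg_iso_betw f P Q \<longleftrightarrow> bij_betw f P Q
     \<and> (\<forall>p\<in>P. \<forall>q\<in>P. f (p + q) = f p + f q \<and> f (p * q) = f p * f q)
     \<and> (\<forall>c. f (Poly_Mapping.single 0 c) = Poly_Mapping.single 0 c)"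

end

theory Submission
  imports Defs
begin

text \<open>
  Let \<open>k = \<alpha> i\<close>, indices being 0-based. The variables of \<open>(\<A>\<^sup>\<alpha>)\<^sup>\<gamma>\<close> are the copies
  \<open>(x\<^sub>j\<^sub>l, 0)\<close> of the variables of \<open>S\<^sup>\<alpha>\<close> together with a second copy \<open>(x\<^sub>i\<^sub>,\<^sub>k\<^sub>-\<^sub>1, 1)\<close> of the
  last variable of the \<open>i\<close>-th block. Sending \<open>(x\<^sub>j\<^sub>l, 0)\<close> to \<open>x\<^sub>j\<^sub>l\<close> and the second copy to the
  new variable \<open>x\<^sub>i\<^sub>k\<close> of \<open>S\<^sup>\<beta>\<close> is a bijection of variable sets which turns the composite
  projection \<open>\<pi>\<^sub>\<alpha> \<circ> \<pi>\<^sub>\<gamma>\<close> into \<open>\<pi>\<^sub>\<beta>\<close>, so it maps \<open>(\<A>\<^sup>\<alpha>)\<^sup>\<gamma>\<close> onto \<open>\<A>\<^sup>\<beta>\<close>. Extended linearly,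
  a bijective renaming of variables is a ring isomorphism of polynomial rings, and it
  restricts to an isomorphism of the monomial algebras.
\<close>

definition push :: "('a \<Rightarrow> 'b) \<Rightarrow> ('a \<Rightarrow>\<^sub>0 'k::comm_monoid_add) \<Rightarrow> ('b \<Rightarrow>\<^sub>0 'k)" where
  "push F p = (\<Sum>a\<in>Poly_Mapping.keys p. Poly_Mapping.single (F a) (Poly_Mapping.lookup p a))"

lemma push_superset:
  assumes "finite S" "Poly_Mapping.keys p \<subseteq> S"
  shows "push F p = (\<Sum>a\<in>S. Poly_Mapping.single (F a) (Poly_Mapping.lookup p a))"
  unfolding push_def
  by (rule sum.mono_neutral_left) (use assms in \<open>auto simp: in_keys_iff\<close>)

lemma push_add: "push F (p + q) = push F p + push F q"
proof -
  let ?S = "Poly_Mapping.keys p \<union> Poly_Mapping.keys q"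
  have "push F (p + q) = (\<Sum>a\<in>?S. Poly_Mapping.single (F a) (Poly_Mapping.lookup (p + q) a))"
    by (rule push_superset) (simp_all add: keys_add)
  also have "\<dots> = (\<Sum>a\<in>?S. Poly_Mapping.single (F a) (Poly_Mapping.lookup p a))
                 + (\<Sum>a\<in>?S. Poly_Mapping.single (F a) (Poly_Mapping.lookup q a))"
    by (simp only: lookup_add single_add sum.distrib)
  also have "\<dots> = push F p + push F q"
    by (subst (1 2) push_superset[of ?S]) auto
  finally show ?thesis .
qed

lemma push_zero [simp]: "push F 0 = 0"
  by (simp add: push_def)

lemma push_single [simp]: "push F (Poly_Mapping.single a c) = Poly_Mapping.single (F a) c"
  by (cases "c = 0") (auto simp: push_def)

lemma push_sum: "push F (sum f I) = (\<Sum>i\<in>I. push F (f i))"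
  by (induction I rule: infinite_finite_induct) (auto simp: push_add)

lemma push_id: "push (\<lambda>a. a) p = p"
  by (rule poly_mapping_eqI)
     (auto simp: push_def lookup_sum lookup_single when_def in_keys_iff sum.delta cong: sum.cong)

lemma push_id_on:
  assumes "\<And>a. a \<in> Poly_Mapping.keys p \<Longrightarrow> G a = a"
  shows "push G p = p"
  using assms push_id[of p] unfolding push_def by (metis (no_types, lifting) sum.cong)

lemma push_compose: "push G (push F p) = push (G \<circ> F) p"
  by (simp add: push_def[of F] push_def[of "G \<circ> F"] push_sum)

lemma keys_push: "Poly_Mapping.keys (push F p) \<subseteq> F ` Poly_Mapping.keys p"
  unfolding push_def by (rule order_trans[OF keys_sum]) auto

lemma push_mult:
  fixes F :: "'a::comm_monoid_add \<Rightarrow> 'b::comm_monoid_add"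
  assumes hom: "\<And>a b. F (a + b) = F a + F b"
  shows "push F (p * q) = push F p * (push F q :: 'b \<Rightarrow>\<^sub>0 'k::comm_semiring_1)"
proof -
  have "p * q = push (\<lambda>a. a) p * push (\<lambda>a. a) q"
    by (simp only: push_id)
  also have "\<dots> = (\<Sum>a\<in>Poly_Mapping.keys p. \<Sum>b\<in>Poly_Mapping.keys q.
       Poly_Mapping.single (a + b) (Poly_Mapping.lookup p a * Poly_Mapping.lookup q b))"
    by (simp only: push_def sum_product mult_single)
  finally have "push F (p * q) = (\<Sum>a\<in>Poly_Mapping.keys p. \<Sum>b\<in>Poly_Mapping.keys q.
       Poly_Mapping.single (F a + F b) (Poly_Mapping.lookup p a * Poly_Mapping.lookup q b))"
    by (simp only: push_sum push_single hom)
  also have "\<dots> = push F p * push F q"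
    by (simp only: push_def sum_product mult_single)
  finally show ?thesis .
qed

lemma lookup_map_key:
  assumes [transfer_rule]: "inj f"
  shows "Poly_Mapping.lookup (Poly_Mapping.map_key f p) x = Poly_Mapping.lookup p (f x)"
  by transfer simp

lemma lookup_push_inj:
  assumes "inj F"
  shows "Poly_Mapping.lookup (push F p) (F a) = Poly_Mapping.lookup p a"
  using inj_eq[OF assms]
  by (auto simp: push_def lookup_sum lookup_single when_def in_keys_iff sum.delta cong: sum.cong)

lemma map_key_push:
  assumes "inj F"
  shows "Poly_Mapping.map_key F (push F p) = p"
  by (rule poly_mapping_eqI) (simp add: lookup_map_key lookup_push_inj assms)

lemma push_map_key:
  assumes "inj F" and "Poly_Mapping.keys p \<subseteq> range F"
  shows "push F (Poly_Mapping.map_key F p) = p"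
proof (rule poly_mapping_eqI)
  fix y
  show "Poly_Mapping.lookup (push F (Poly_Mapping.map_key F p)) y = Poly_Mapping.lookup p y"
  proof (cases "y \<in> range F")
    case True
    then obtain x where "y = F x" by blast
    then show ?thesis by (simp add: lookup_push_inj[OF assms(1)] lookup_map_key[OF assms(1)])
  next
    case False
    then have "y \<notin> Poly_Mapping.keys (push F (Poly_Mapping.map_key F p))"
      using keys_push[of F "Poly_Mapping.map_key F p"] by blast
    moreover have "y \<notin> Poly_Mapping.keys p"
      using False assms(2) by blast
    ultimately show ?thesis by (simp add: in_keys_iff)
  qed
qed

lemma mon_alg_image_eq:
  fixes f :: "('v, 'k::field) mpoly \<Rightarrow> ('w, 'k) mpoly"
  assumes hom_add: "\<And>p q. f (p + q) = f p + f q" and hom_mult: "\<And>p q. f (p * q) = f p * f q"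
    and hom_const: "\<And>c. f (Poly_Mapping.single 0 c) = Poly_Mapping.single 0 c"
    and hom_gen: "\<And>m. f (Poly_Mapping.single m 1) = Poly_Mapping.single (M m) 1"
  shows "f ` mon_alg B = mon_alg (M ` B)"
proof
  have "f p \<in> mon_alg (M ` B)" if "p \<in> mon_alg B" for p
    using that
  proof (induction p rule: mon_alg.induct)
    case (const c)
    show ?case by (simp only: hom_const mon_alg.const)
  next
    case (gen m)
    then show ?case by (simp only: hom_gen mon_alg.gen imageI)
  next
    case (add p q)
    then show ?case by (simp only: hom_add mon_alg.add)
  next
    case (mult p q)
    then show ?case by (simp only: hom_mult mon_alg.mult)
  qed
  then show "f ` mon_alg B \<subseteq> mon_alg (M ` B)" by blast
  show "mon_alg (M ` B) \<subseteq> f ` mon_alg B"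
  proof
    fix q :: "('w, 'k) mpoly" assume "q \<in> mon_alg (M ` B)"
    then show "q \<in> f ` mon_alg B"
    proof (induction q rule: mon_alg.induct)
      case (const c)
      show ?case by (metis hom_const image_eqI mon_alg.const)
    next
      case (gen m)
      then obtain b where "b \<in> B" "m = M b" by blast
      then show ?case by (metis hom_gen image_eqI mon_alg.gen)
    next
      case (add p q)
      then obtain p' q' where "p' \<in> mon_alg B" "q' \<in> mon_alg B" "p = f p'" "q = f q'" by blast
      then show ?case by (metis hom_add image_eqI mon_alg.add)
    next
      case (mult p q)
      then obtain p' q' where "p' \<in> mon_alg B" "q' \<in> mon_alg B" "p = f p'" "q = f q'" by blast
      then show ?case by (metis hom_mult image_eqI mon_alg.mult)
    qed
  qed
qed

lemma keys_mon_alg: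
  assumes "\<And>b. b \<in> B \<Longrightarrow> Poly_Mapping.keys b \<subseteq> D"
  shows "p \<in> mon_alg B \<Longrightarrow> a \<in> Poly_Mapping.keys p \<Longrightarrow> Poly_Mapping.keys a \<subseteq> D"
proof (induction p arbitrary: a rule: mon_alg.induct)
  case (const c)
  then show ?case by (auto split: if_splits)
next
  case (gen m)
  then show ?case using assms by (auto split: if_splits)
next
  case (add p q)
  then show ?case using keys_add[of p q] by blast
next
  case (mult p q)
  then obtain a1 a2 where "a = a1 + a2" "a1 \<in> Poly_Mapping.keys p" "a2 \<in> Poly_Mapping.keys q"
    using keys_mult[of p q] by blast
  then show ?case using mult keys_add[of a1 a2] by blast
qed

lemma alg_iso_betw_push_map_key:
  assumes inj: "inj \<tau>" and B: "\<And>b. b \<in> B \<Longrightarrow> Poly_Mapping.keys b \<subseteq> range \<tau>"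
  shows "alg_iso_betw (push (Poly_Mapping.map_key \<tau>))
           (mon_alg B :: ('v, 'k::field) mpoly set) (mon_alg (Poly_Mapping.map_key \<tau> ` B))"
proof -
  let ?\<phi> = "push (Poly_Mapping.map_key \<tau>) :: ('v, 'k) mpoly \<Rightarrow> _"
  have add: "?\<phi> (p + q) = ?\<phi> p + ?\<phi> q" for p q by (rule push_add)
  have mult: "?\<phi> (p * q) = ?\<phi> p * ?\<phi> q" for p q by (rule push_mult) (rule map_key_plus[OF inj])
  have const: "?\<phi> (Poly_Mapping.single 0 c) = Poly_Mapping.single 0 c" for c
    by (simp add: inj)
  have "?\<phi> ` mon_alg B = mon_alg (Poly_Mapping.map_key \<tau> ` B)"
    by (rule mon_alg_image_eq[OF add mult const push_single])
  moreover have "inj_on ?\<phi> (mon_alg B)"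
  proof (rule inj_on_inverseI)
    fix p :: "('v, 'k) mpoly" assume "p \<in> mon_alg B"
    then have "push (push \<tau> \<circ> Poly_Mapping.map_key \<tau>) p = p"
      by (intro push_id_on) (simp add: push_map_key inj keys_mon_alg[OF B])
    then show "push (push \<tau>) (?\<phi> p) = p" by (simp add: push_compose)
  qed
  ultimately show ?thesis
    unfolding alg_iso_betw_def bij_betw_def using add mult const by blast
qed

lemma lookup_mon_proj:
  "Poly_Mapping.lookup (mon_proj g w) v = (\<Sum>l<g v. Poly_Mapping.lookup w (v, l))"
proof -
  have "{v. (\<Sum>l<g v. Poly_Mapping.lookup w (v, l)) \<noteq> 0} \<subseteq> fst ` Poly_Mapping.keys w"
  proof
    fix v assume "v \<in> {v. (\<Sum>l<g v. Poly_Mapping.lookup w (v, l)) \<noteq> 0}"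
    then obtain l where "Poly_Mapping.lookup w (v, l) \<noteq> 0"
      using sum.not_neutral_contains_not_neutral by fastforce
    then show "v \<in> fst ` Poly_Mapping.keys w"
      by (metis fst_conv image_eqI in_keys_iff)
  qed
  then have "finite {v. (\<Sum>l<g v. Poly_Mapping.lookup w (v, l)) \<noteq> 0}"
    by (rule finite_subset) simp
  then show ?thesis
    unfolding mon_proj_def by (simp only: lookup_Abs_poly_mapping)
qed

lemma keys_mon_proj:
  assumes "Poly_Mapping.keys w \<subseteq> exp_vars V g"
  shows "Poly_Mapping.keys (mon_proj g w) \<subseteq> V"
proof
  fix v assume "v \<in> Poly_Mapping.keys (mon_proj g w)"
  then obtain l where "Poly_Mapping.lookup w (v, l) \<noteq> 0"
    using sum.not_neutral_contains_not_neutral by (fastforce simp: in_keys_iff lookup_mon_proj)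
  then have "(v, l) \<in> exp_vars V g"
    using assms by (auto simp: in_keys_iff)
  then show "v \<in> V"
    by (simp add: exp_vars_def)
qed

text \<open>
  The inverse of the renaming above. It is injective on all of \<open>'v \<times> nat\<close>, as
  \<open>Poly_Mapping.map_key\<close> requires, and \<open>map_key (relabel i k)\<close> performs the renaming on monomials.
\<close>

definition relabel :: "'v \<Rightarrow> nat \<Rightarrow> 'v \<times> nat \<Rightarrow> ('v \<times> nat) \<times> nat" where
  "relabel i k x = (if x = (i, k) then ((i, k - 1), 1) else (x, 0))"

lemma inj_relabel: "inj (relabel i k)"
  by (auto simp: inj_def relabel_def)

lemma relabel_image_exp_vars:
  assumes "1 \<le> \<alpha> i"
  shows "relabel i (\<alpha> i) ` exp_vars V (\<alpha>(i := \<alpha> i + 1))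
       = exp_vars (exp_vars V \<alpha>) (\<lambda>v. if v = (i, \<alpha> i - 1) then 2 else 1)"
  (is "?L = ?R")
proof
  show "?L \<subseteq> ?R"
    using assms by (auto simp: exp_vars_def relabel_def split: if_splits)
  show "?R \<subseteq> ?L"
  proof
    fix y assume y: "y \<in> ?R"
    show "y \<in> ?L"
    proof (cases "snd y = 0")
      case True
      with y show ?thesis
        by (auto simp: exp_vars_def relabel_def image_iff split: if_splits intro!: bexI[of _ "fst y"])
    next
      case False
      with y assms have "y = relabel i (\<alpha> i) (i, \<alpha> i)" "(i, \<alpha> i) \<in> exp_vars V (\<alpha>(i := \<alpha> i + 1))"
        by (auto simp: exp_vars_def relabel_def split: if_splits)
      then show ?thesis by blast
    qed
  qed
qed

lemma mon_proj_map_key_relabel: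
  assumes "1 \<le> \<alpha> i"
  shows "mon_proj (\<alpha>(i := \<alpha> i + 1)) (Poly_Mapping.map_key (relabel i (\<alpha> i)) m)
       = mon_proj \<alpha> (mon_proj (\<lambda>v. if v = (i, \<alpha> i - 1) then 2 else 1) m)"
proof -
  obtain k where k: "\<alpha> i = Suc k" using assms by (cases "\<alpha> i") auto
  let ?\<gamma> = "\<lambda>v. if v = (i, k) then 2 else 1 :: nat"
  let ?m = "\<lambda>x. Poly_Mapping.lookup m x"
  have "Poly_Mapping.lookup (mon_proj (\<alpha>(i := Suc (Suc k))) (Poly_Mapping.map_key (relabel i (Suc k)) m)) v
      = Poly_Mapping.lookup (mon_proj \<alpha> (mon_proj ?\<gamma> m)) v" for v
  proof (cases "v = i")
    case False
    then show ?thesis by (simp add: lookup_mon_proj lookup_map_key inj_relabel relabel_def)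
  next
    case True
    have "(\<Sum>l<k. ?m (relabel i (Suc k) (i, l))) = (\<Sum>l<k. ?m ((i, l), 0))"
      by (rule sum.cong) (auto simp: relabel_def)
    then have lhs: "(\<Sum>l<Suc (Suc k). ?m (relabel i (Suc k) (i, l)))
                  = (\<Sum>l<k. ?m ((i, l), 0)) + (?m ((i, k), 0) + ?m ((i, k), 1))"
      by (simp add: relabel_def)
    have "(\<Sum>l<k. \<Sum>j<?\<gamma> (i, l). ?m ((i, l), j)) = (\<Sum>l<k. ?m ((i, l), 0))"
      by (rule sum.cong) auto
    then have rhs: "(\<Sum>l<Suc k. \<Sum>j<?\<gamma> (i, l). ?m ((i, l), j))
                  = (\<Sum>l<k. ?m ((i, l), 0)) + (?m ((i, k), 0) + ?m ((i, k), 1))"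
      by (simp add: numeral_2_eq_2)
    show ?thesis
      using lhs rhs by (simp add: True k lookup_mon_proj lookup_map_key inj_relabel)
  qed
  then show ?thesis
    unfolding k by (intro poly_mapping_eqI) simp
qed

lemma expand_relabel:
  assumes "1 \<le> \<alpha> i"
  shows "expand V (\<alpha>(i := \<alpha> i + 1)) A
       = Poly_Mapping.map_key (relabel i (\<alpha> i))
           ` expand (exp_vars V \<alpha>) (\<lambda>v. if v = (i, \<alpha> i - 1) then 2 else 1) (expand V \<alpha> A)"
  (is "?E = Poly_Mapping.map_key ?\<tau> ` expand ?V ?\<gamma> _")
proof -
  let ?T = "exp_vars V (\<alpha>(i := \<alpha> i + 1))"
  have image: "?\<tau> ` ?T = exp_vars ?V ?\<gamma>"
    by (rule relabel_image_exp_vars[where \<alpha> = \<alpha>, OF assms])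
  have vimage: "?\<tau> -` exp_vars ?V ?\<gamma> = ?T"
    by (simp only: image[symmetric] inj_vimage_image_eq[OF inj_relabel])
  have proj: "mon_proj (\<alpha>(i := \<alpha> i + 1)) (Poly_Mapping.map_key ?\<tau> m) = mon_proj \<alpha> (mon_proj ?\<gamma> m)" for m
    by (rule mon_proj_map_key_relabel[where \<alpha> = \<alpha>, OF assms])
  show ?thesis
  proof
    show "?E \<subseteq> Poly_Mapping.map_key ?\<tau> ` expand ?V ?\<gamma> (expand V \<alpha> A)"
    proof
      fix m' assume m': "m' \<in> ?E"
      define m where "m = push ?\<tau> m'"
      have m'_eq: "m' = Poly_Mapping.map_key ?\<tau> m"
        unfolding m_def by (simp add: map_key_push inj_relabel)
      have keys_m: "Poly_Mapping.keys m \<subseteq> exp_vars ?V ?\<gamma>"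
        using m' keys_push[of ?\<tau> m'] unfolding m_def image[symmetric] expand_def by blast
      moreover have "mon_proj \<alpha> (mon_proj ?\<gamma> m) \<in> A"
        using m' unfolding proj[symmetric] m'_eq expand_def by blast
      ultimately have "m \<in> expand ?V ?\<gamma> (expand V \<alpha> A)"
        using keys_mon_proj[OF keys_m] by (simp add: expand_def)
      with m'_eq show "m' \<in> Poly_Mapping.map_key ?\<tau> ` expand ?V ?\<gamma> (expand V \<alpha> A)" by blast
    qed
    show "Poly_Mapping.map_key ?\<tau> ` expand ?V ?\<gamma> (expand V \<alpha> A) \<subseteq> ?E"
    proof
      fix m' assume "m' \<in> Poly_Mapping.map_key ?\<tau> ` expand ?V ?\<gamma> (expand V \<alpha> A)"
      then obtain m where m: "m \<in> expand ?V ?\<gamma> (expand V \<alpha> A)" and m': "m' = Poly_Mapping.map_key ?\<tau> m"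
        by blast
      have "Poly_Mapping.keys m' \<subseteq> ?T"
        using m unfolding m' keys_map_key[OF inj_relabel] vimage[symmetric] expand_def by blast
      moreover have "mon_proj (\<alpha>(i := \<alpha> i + 1)) m' \<in> A"
        using m unfolding m' proj expand_def by blast
      ultimately show "m' \<in> ?E" unfolding expand_def by blast
    qed
  qed
qed

theorem lemma2p10:
  fixes A :: "nat monomial set" and n :: nat and \<alpha> :: "nat \<Rightarrow> nat" and i :: nat
  assumes "finite A"
    and "\<forall>m\<in>A. Poly_Mapping.keys m \<subseteq> {..<n}"
    and "minimal_mon_set A"
    and "\<forall>j<n. \<alpha> j \<ge> 1"
    and "i < n"
  defines "\<beta> \<equiv> \<alpha>(i := \<alpha> i + 1)"
    and "\<gamma> \<equiv> (\<lambda>v::nat \<times> nat. if v = (i, \<alpha> i - 1) then 2 else 1)"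
  shows "\<exists>(\<sigma> :: (nat \<times> nat) \<times> nat \<Rightarrow> nat \<times> nat) (\<phi> :: ((nat \<times> nat) \<times> nat, 'k::field) mpoly \<Rightarrow> (nat \<times> nat, 'k) mpoly).
     bij_betw \<sigma> (exp_vars (exp_vars {..<n} \<alpha>) \<gamma>) (exp_vars {..<n} \<beta>)
     \<and> alg_iso_betw \<phi> (mon_alg (expand (exp_vars {..<n} \<alpha>) \<gamma> (expand {..<n} \<alpha> A)))
                       (mon_alg (expand {..<n} \<beta> A))
     \<and> (\<forall>m \<in> expand (exp_vars {..<n} \<alpha>) \<gamma> (expand {..<n} \<alpha> A).
          \<exists>m'. Poly_Mapping.keys m' \<subseteq> exp_vars {..<n} \<beta>
             \<and> (\<forall>v \<in> exp_vars (exp_vars {..<n} \<alpha>) \<gamma>. Poly_Mapping.lookup m' (\<sigma> v) = Poly_Mapping.lookup m v)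
             \<and> \<phi> (Poly_Mapping.single m 1) = Poly_Mapping.single m' 1)"
proof -
  let ?\<tau> = "relabel i (\<alpha> i)"
  let ?D = "exp_vars (exp_vars {..<n} \<alpha>) \<gamma>" and ?T = "exp_vars {..<n} \<beta>"
  let ?E = "expand (exp_vars {..<n} \<alpha>) \<gamma> (expand {..<n} \<alpha> A)"
  have "1 \<le> \<alpha> i" using assms(4,5) by blast
  then have image: "?\<tau> ` ?T = ?D" and expand: "expand {..<n} \<beta> A = Poly_Mapping.map_key ?\<tau> ` ?E"
    unfolding \<beta>_def \<gamma>_def
    by (rule relabel_image_exp_vars[where \<alpha> = \<alpha>], rule expand_relabel[where \<alpha> = \<alpha>])
  have bij: "bij_betw (inv_into ?T ?\<tau>) ?D ?T"
    using image by (intro bij_betw_inv_into) (simp add: bij_betw_def inj_on_subset[OF inj_relabel])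
  have keys_E: "Poly_Mapping.keys m \<subseteq> range ?\<tau>" if "m \<in> ?E" for m
    using that image unfolding expand_def by blast
  have iso: "alg_iso_betw (push (Poly_Mapping.map_key ?\<tau>)) (mon_alg ?E :: (_, 'k) mpoly set) (mon_alg (expand {..<n} \<beta> A))"
    unfolding expand by (rule alg_iso_betw_push_map_key[OF inj_relabel keys_E])
  show ?thesis
  proof (intro exI conjI ballI)
    fix m assume "m \<in> ?E"
    then show "Poly_Mapping.keys (Poly_Mapping.map_key ?\<tau> m) \<subseteq> ?T"
      using expand unfolding expand_def by blast
    show "Poly_Mapping.lookup (Poly_Mapping.map_key ?\<tau> m) (inv_into ?T ?\<tau> v) = Poly_Mapping.lookup m v"
      if "v \<in> ?D" for v
      using that image by (simp add: lookup_map_key inj_relabel f_inv_into_f)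
  qed (use bij iso in auto)
qed

end
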